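(* Let $\Gamma$ be a typing context, $e, e'$ terms and $A$ a type of the language $\widetilde{F}$ described in the context. If $\Gamma\vdash e:A$ and $e\to e'$ (one step of the small-step call-by-value reduction), then $\Gamma\vdash e':A$.
   Context: $\widetilde{F}$ is a higher-order functional array language. Types: $T ::= M \mid T_1\Rightarrow\cdots\Rightarrow T_n\Rightarrow M$ (function types, no currying), $M ::= \mathrm{Num}\mid \mathrm{Array}\langle M\rangle \mid M\times M\mid \mathrm{Bool}$, $\mathrm{Num}::=\mathrm{Double}\mid\mathrm{Index}$. Terms: $e ::= e\,e_1\cdots e_n \mid \lambda x_1\cdots x_n.\,e \mid x \mid r \mid i \mid \mathrm{true}\mid\mathrm{false}\mid c \mid \mathrm{let}\ x=e\ \mathrm{in}\ e \mid \mathrm{if}\ e\ \mathrm{then}\ e\ \mathrm{else}\ e \mid [e,\dots,e]\mid \bot$, where $r$ are real constants (type Double), $i$ index constants (type Index), and $\bot$ is a divergence term available at every type. Typing rules: (App) if $e_0: T_1\Rightarrow\cdots\Rightarrow T_n\Rightarrow M$ and $e_k:T_k$ then $e_0\,e_1\cdots e_n:M$; (Abs) if $\Gamma, x_1:T_1,\dots,x_n:T_n\vdash e:M$ then $\Gamma\vdash\lambda x_1\cdots x_n.e: T_1\Rightarrow\cdots\Rightarrow T_n\Rightarrow M$; (Var) $x:T\in\Gamma$ gives $\Gamma\vdash x:T$; (Let) $\Gamma\vdash e_1:T_1$ and $\Gamma,x:T_1\vdash e_2:T_2$ give $\Gamma\vdash \mathrm{let}\ x=e_1\ \mathrm{in}\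 e_2:T_2$; (If) $e_1:\mathrm{Bool}$, $e_2:M$, $e_3:M$ give $\mathrm{if}\ e_1\ \mathrm{then}\ e_2\ \mathrm{else}\ e_3:M$. Unary operators $\mathrm{op}_1$ (e.g. $-:\mathrm{Num}\Rightarrow\mathrm{Num}$; $\sin,\cos,\tan,\log,\exp:\mathrm{Double}\Rightarrow\mathrm{Double}$; $\mathrm{not}:\mathrm{Bool}\Rightarrow\mathrm{Bool}$) and binary operators $\mathrm{op}_2$ ($+,-,*,/,**:\mathrm{Num}\Rightarrow\mathrm{Num}\Rightarrow\mathrm{Num}$; $>,<,==,<>:\mathrm{Num}\Rightarrow\mathrm{Num}\Rightarrow\mathrm{Bool}$; $\&\&,||:\mathrm{Bool}\Rightarrow\mathrm{Bool}\Rightarrow\mathrm{Bool}$) are given by typing rules of the form: if $\Gamma\vdash e:A$ then $\Gamma\vdash\mathrm{op}_1(e):B$ for $\mathrm{op}_1:A\Rightarrow B$, and similarly for $\mathrm{op}_2(e_1,e_2)$. Further constants: $\mathrm{build}:\mathrm{Index}\Rightarrow(\mathrm{Index}\Rightarrow M)\Rightarrow\mathrm{Array}\langle M\rangle$, $\mathrm{ifold}:(M\Rightarrow\mathrm{Index}\Rightarrow M)\Rightarrow M\Rightarrow\mathrm{Index}\Rightarrow M$, $\mathrm{get}:\mathrm{Array}\langle M\rangle\Rightarrow\mathrm{Index}\Rightarrow M$, $\mathrm{length}:\mathrm{Array}\langle M\rangle\Rightarrow\mathrm{Index}$, $\mathrm{pair}:M_1\Rightarrow M_2\Rightarrow M_1\times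 M_2$ (written $(e_0,e_1)$), $\mathrm{fst}:M_1\times M_2\Rightarrow M_1$, $\mathrm{snd}:M_1\times M_2\Rightarrow M_2$. Values: $v::= r\mid i\mid\mathrm{true}\mid\mathrm{false}\mid (v_0,v_1)\mid \lambda x_1\cdots x_n.e\mid [v_0,\dots,v_{n-1}]$. Small-step call-by-value reduction $\to$ (left-to-right evaluation of arguments): congruence rules $e\to e'\Rightarrow e\,e_1\to e'\,e_1$; $e_0\to e_0'\Rightarrow v\,e_0\to v\,e_0'$; $\mathrm{op}_1(e)\to\mathrm{op}_1(e')$; $\mathrm{op}_2(e_0,e_1)\to\mathrm{op}_2(e_0',e_1)$; $\mathrm{op}_2(v,e_0)\to\mathrm{op}_2(v,e_0')$; $\mathrm{let}\ x=e_0\ \mathrm{in}\ e_1\to\mathrm{let}\ x=e_0'\ \mathrm{in}\ e_1$; and axioms $(\lambda x.e)\,v\to e[v/x]$; $\mathrm{let}\ x=v\ \mathrm{in}\ e\to e[v/x]$; $\mathrm{fst}(v_0,v_1)\to v_0$; $\mathrm{snd}(v_0,v_1)\to v_1$; $\mathrm{if\ true\ then}\ e_0\ \mathrm{else}\ e_1\to e_0$; $\mathrm{if\ false\ then}\ e_0\ \mathrm{else}\ e_1\to e_1$; $\mathrm{op}_1(\underline v)\to\underline{\mathrm{op}_1(v)}$ if $v\in\mathrm{Dom}(\mathrm{op}_1)$ and $\to\bot$ otherwise; $\mathrm{op}_2(\underline{v_0},\underline{v_1})\to\underline{\mathrm{op}_2(v_0,v_1)}$ if $(v_0,v_1)\in\mathrm{Dom}(\mathrm{op}_2)$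 and $\to\bot$ otherwise ($\mathrm{Dom}$ is the standard domain of definition, e.g. $\mathrm{Dom}(\tan)=\{v\in\mathbb R:\cos v\neq0\}$); $\mathrm{get}([v_0,\dots,v_{n-1}])(i)\to v_i$ for $0\le i<n$; $\mathrm{length}([v_0,\dots,v_{n-1}])\to n$; $\mathrm{build}(n)(\lambda x.e)\to[e[0/x],\dots,e[n-1/x]]$; $\mathrm{ifold}(v)(v_0)(0)\to v_0$; $\mathrm{ifold}(v)(v_0)(i+1)\to v(\mathrm{ifold}(v)(v_0)(i))(i)$. Any construct with an argument reducing to $\bot$ reduces to $\bot$. *)

theory Defs
  imports Complex_Main
begin

datatype mty = TDouble | TIndex | TBool | TArray mty | TProd mty mty

text \<open>Types T ::= M | T1 => ... => Tn => M with n >= 1 (no currying).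
  Arrow T1 [T2,...,Tn] M stands for T1 => T2 => ... => Tn => M.\<close>
datatype ty = Ground mty | Arrow ty "ty list" mty

fun arg_tys :: "ty \<Rightarrow> ty list" where
  "arg_tys (Arrow T Ts M) = T # Ts"
| "arg_tys (Ground M) = []"

definition is_num :: "mty \<Rightarrow> bool" where
  "is_num A \<longleftrightarrow> A = TDouble \<or> A = TIndex"

datatype op1 = ONeg | OSin | OCos | OTan | OLog | OExp | ONot
datatype op2 = OAdd | OSub | OMul | ODiv | OPow | OGt | OLt | OEq | ONeq | OAnd | OOr

datatype const = CBuild | CIfold | CGet | CLength | CPair | CFst | CSnd

text \<open>Variables are de Bruijn indices. TLam n e binds n variables x1..xn at once:
  inside e, index k < n denotes x_(k+1), index k >= n denotes free variable k - n.
  TLet e1 e2 binds one variable (index 0) in e2.\<close>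
datatype trm =
    TVar nat
  | TReal real
  | TIdx int
  | TTrue
  | TFalse
  | TConst const
  | TApp trm "trm list"
  | TLam nat trm
  | TLet trm trm
  | TIf trm trm trm
  | TArr "trm list"
  | TOp1 op1 trm
  | TOp2 op2 trm trm
  | TBot

inductive op1_ty :: "op1 \<Rightarrow> mty \<Rightarrow> mty \<Rightarrow> bool" where
  "is_num A \<Longrightarrow> op1_ty ONeg A A"
| "op1_ty OSin TDouble TDouble"
| "op1_ty OCos TDouble TDouble"
| "op1_ty OTan TDouble TDouble"
| "op1_ty OLog TDouble TDouble"
| "op1_ty OExp TDouble TDouble"
| "op1_ty ONot TBool TBool"

inductive op2_ty :: "op2 \<Rightarrow> mty \<Rightarrow> mty \<Rightarrow> mty \<Rightarrow> bool" where
  "is_num A \<Longrightarrow> op2_ty OAdd A A A"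
| "is_num A \<Longrightarrow> op2_ty OSub A A A"
| "is_num A \<Longrightarrow> op2_ty OMul A A A"
| "is_num A \<Longrightarrow> op2_ty ODiv A A A"
| "is_num A \<Longrightarrow> op2_ty OPow A A A"
| "is_num A \<Longrightarrow> op2_ty OGt A A TBool"
| "is_num A \<Longrightarrow> op2_ty OLt A A TBool"
| "is_num A \<Longrightarrow> op2_ty OEq A A TBool"
| "is_num A \<Longrightarrow> op2_ty ONeq A A TBool"
| "op2_ty OAnd TBool TBool TBool"
| "op2_ty OOr TBool TBool TBool"

inductive const_ty :: "const \<Rightarrow> ty \<Rightarrow> bool" where
  "const_ty CBuild (Arrow (Ground TIndex) [Arrow (Ground TIndex) [] M] (TArray M))"
| "const_ty CIfold (Arrow (Arrow (Ground M) [Ground TIndex] M) [Ground M, Ground TIndex] M)"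
| "const_ty CGet (Arrow (Ground (TArray M)) [Ground TIndex] M)"
| "const_ty CLength (Arrow (Ground (TArray M)) [] TIndex)"
| "const_ty CPair (Arrow (Ground M1) [Ground M2] (TProd M1 M2))"
| "const_ty CFst (Arrow (Ground (TProd M1 M2)) [] M1)"
| "const_ty CSnd (Arrow (Ground (TProd M1 M2)) [] M2)"

inductive typing :: "ty list \<Rightarrow> trm \<Rightarrow> ty \<Rightarrow> bool" ("_ \<turnstile> _ : _" [50,50,50] 50) where
  T_Var: "k < length \<Gamma> \<Longrightarrow> \<Gamma> \<turnstile> TVar k : \<Gamma> ! k"
| T_Real: "\<Gamma> \<turnstile> TReal r : Ground TDouble"
| T_Idx: "\<Gamma> \<turnstile> TIdx i : Ground TIndex"
| T_True: "\<Gamma> \<turnstile> TTrue : Ground TBool"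
| T_False: "\<Gamma> \<turnstile> TFalse : Ground TBool"
| T_Const: "const_ty c T \<Longrightarrow> \<Gamma> \<turnstile> TConst c : T"
| T_App: "\<Gamma> \<turnstile> e0 : Arrow T Ts M \<Longrightarrow> list_all2 (typing \<Gamma>) es (T # Ts)
           \<Longrightarrow> \<Gamma> \<turnstile> TApp e0 es : Ground M"
| T_Abs: "(T # Ts) @ \<Gamma> \<turnstile> e : Ground M \<Longrightarrow> n = Suc (length Ts)
           \<Longrightarrow> \<Gamma> \<turnstile> TLam n e : Arrow T Ts M"
| T_Let: "\<Gamma> \<turnstile> e1 : T1 \<Longrightarrow> T1 # \<Gamma> \<turnstile> e2 : T2 \<Longrightarrow> \<Gamma> \<turnstile> TLet e1 e2 : T2"
| T_If: "\<Gamma> \<turnstile> e1 : Ground TBool \<Longrightarrow> \<Gamma> \<turnstile> e2 : Ground M \<Longrightarrow> \<Gamma> \<turnstile> e3 : Ground M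
           \<Longrightarrow> \<Gamma> \<turnstile> TIf e1 e2 e3 : Ground M"
| T_Arr: "\<forall>e\<in>set es. \<Gamma> \<turnstile> e : Ground M \<Longrightarrow> \<Gamma> \<turnstile> TArr es : Ground (TArray M)"
| T_Op1: "\<Gamma> \<turnstile> e : Ground A \<Longrightarrow> op1_ty opr A B \<Longrightarrow> \<Gamma> \<turnstile> TOp1 opr e : Ground B"
| T_Op2: "\<Gamma> \<turnstile> e1 : Ground A1 \<Longrightarrow> \<Gamma> \<turnstile> e2 : Ground A2 \<Longrightarrow> op2_ty opr A1 A2 B
           \<Longrightarrow> \<Gamma> \<turnstile> TOp2 opr e1 e2 : Ground B"
| T_Bot: "\<Gamma> \<turnstile> TBot : T"

inductive is_val :: "trm \<Rightarrow> bool" where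
  "is_val (TReal r)"
| "is_val (TIdx i)"
| "is_val TTrue"
| "is_val TFalse"
| "is_val (TConst c)"
| "is_val (TLam n e)"
| "is_val v0 \<Longrightarrow> is_val v1 \<Longrightarrow> is_val (TApp (TConst CPair) [v0, v1])"
| "\<forall>v\<in>set vs. is_val v \<Longrightarrow> is_val (TArr vs)"

fun lift :: "nat \<Rightarrow> nat \<Rightarrow> trm \<Rightarrow> trm" where
  "lift k d (TVar i) = (if i < k then TVar i else TVar (i + d))"
| "lift k d (TApp f es) = TApp (lift k d f) (map (lift k d) es)"
| "lift k d (TLam n e) = TLam n (lift (k + n) d e)"
| "lift k d (TLet e1 e2) = TLet (lift k d e1) (lift (Suc k) d e2)"
| "lift k d (TIf e1 e2 e3) = TIf (lift k d e1) (lift k d e2) (lift k d e3)"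
| "lift k d (TArr es) = TArr (map (lift k d) es)"
| "lift k d (TOp1 opr e) = TOp1 opr (lift k d e)"
| "lift k d (TOp2 opr e1 e2) = TOp2 opr (lift k d e1) (lift k d e2)"
| "lift k d e = e"

text \<open>subst e k vs: simultaneous capture-avoiding substitution of vs ! j for index k + j
  (j < length vs), decrementing the indices above by length vs.\<close>
fun subst :: "trm \<Rightarrow> nat \<Rightarrow> trm list \<Rightarrow> trm" where
  "subst (TVar i) k vs =
     (if i < k then TVar i
      else if i < k + length vs then lift 0 k (vs ! (i - k))
      else TVar (i - length vs))"
| "subst (TApp f es) k vs = TApp (subst f k vs) (map (\<lambda>e. subst e k vs) es)"
| "subst (TLam n e) k vs = TLam n (subst e (k + n) vs)"
| "subst (TLet e1 e2) k vs = TLet (subst e1 k vs) (subst e2 (Suc k) vs)"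
| "subst (TIf e1 e2 e3) k vs = TIf (subst e1 k vs) (subst e2 k vs) (subst e3 k vs)"
| "subst (TArr es) k vs = TArr (map (\<lambda>e. subst e k vs) es)"
| "subst (TOp1 opr e) k vs = TOp1 opr (subst e k vs)"
| "subst (TOp2 opr e1 e2) k vs = TOp2 opr (subst e1 k vs) (subst e2 k vs)"
| "subst e k vs = e"

fun real_lit :: "trm \<Rightarrow> real option" where
  "real_lit (TReal r) = Some r"
| "real_lit _ = None"

fun idx_lit :: "trm \<Rightarrow> int option" where
  "idx_lit (TIdx i) = Some i"
| "idx_lit _ = None"

fun bool_lit_of :: "trm \<Rightarrow> bool option" where
  "bool_lit_of TTrue = Some True"
| "bool_lit_of TFalse = Some False"
| "bool_lit_of _ = None"

definition bool_lit :: "bool \<Rightarrow> trm" where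
  "bool_lit b = (if b then TTrue else TFalse)"

fun real_op1 :: "op1 \<Rightarrow> real \<Rightarrow> trm option" where
  "real_op1 ONeg r = Some (TReal (- r))"
| "real_op1 OSin r = Some (TReal (sin r))"
| "real_op1 OCos r = Some (TReal (cos r))"
| "real_op1 OTan r = (if cos r \<noteq> 0 then Some (TReal (tan r)) else None)"
| "real_op1 OLog r = (if r > 0 then Some (TReal (ln r)) else None)"
| "real_op1 OExp r = Some (TReal (exp r))"
| "real_op1 ONot r = None"

fun idx_op1 :: "op1 \<Rightarrow> int \<Rightarrow> trm option" where
  "idx_op1 ONeg i = Some (TIdx (- i))"
| "idx_op1 _ i = None"

fun bool_op1 :: "op1 \<Rightarrow> bool \<Rightarrow> trm option" where
  "bool_op1 ONot b = Some (bool_lit (\<not> b))"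
| "bool_op1 _ b = None"

definition op1_sem :: "op1 \<Rightarrow> trm \<Rightarrow> trm option" where
  "op1_sem opr v =
     (case real_lit v of Some r \<Rightarrow> real_op1 opr r
      | None \<Rightarrow> (case idx_lit v of Some i \<Rightarrow> idx_op1 opr i
      | None \<Rightarrow> (case bool_lit_of v of Some b \<Rightarrow> bool_op1 opr b
      | None \<Rightarrow> None)))"

fun real_op2 :: "op2 \<Rightarrow> real \<Rightarrow> real \<Rightarrow> trm option" where
  "real_op2 OAdd a b = Some (TReal (a + b))"
| "real_op2 OSub a b = Some (TReal (a - b))"
| "real_op2 OMul a b = Some (TReal (a * b))"
| "real_op2 ODiv a b = (if b \<noteq> 0 then Some (TReal (a / b)) else None)"
| "real_op2 OPow a b = (if a > 0 \<or> (a = 0 \<and> b > 0) then Some (TReal (a powr b)) else None)"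
| "real_op2 OGt a b = Some (bool_lit (a > b))"
| "real_op2 OLt a b = Some (bool_lit (a < b))"
| "real_op2 OEq a b = Some (bool_lit (a = b))"
| "real_op2 ONeq a b = Some (bool_lit (a \<noteq> b))"
| "real_op2 OAnd a b = None"
| "real_op2 OOr a b = None"

fun idx_op2 :: "op2 \<Rightarrow> int \<Rightarrow> int \<Rightarrow> trm option" where
  "idx_op2 OAdd a b = Some (TIdx (a + b))"
| "idx_op2 OSub a b = Some (TIdx (a - b))"
| "idx_op2 OMul a b = Some (TIdx (a * b))"
| "idx_op2 ODiv a b = (if b \<noteq> 0 then Some (TIdx (a div b)) else None)"
| "idx_op2 OPow a b = (if b \<ge> 0 then Some (TIdx (a ^ nat b)) else None)"
| "idx_op2 OGt a b = Some (bool_lit (a > b))"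
| "idx_op2 OLt a b = Some (bool_lit (a < b))"
| "idx_op2 OEq a b = Some (bool_lit (a = b))"
| "idx_op2 ONeq a b = Some (bool_lit (a \<noteq> b))"
| "idx_op2 OAnd a b = None"
| "idx_op2 OOr a b = None"

fun bool_op2 :: "op2 \<Rightarrow> bool \<Rightarrow> bool \<Rightarrow> trm option" where
  "bool_op2 OAnd a b = Some (bool_lit (a \<and> b))"
| "bool_op2 OOr a b = Some (bool_lit (a \<or> b))"
| "bool_op2 _ a b = None"

definition op2_sem :: "op2 \<Rightarrow> trm \<Rightarrow> trm \<Rightarrow> trm option" where
  "op2_sem opr v0 v1 =
     (case (real_lit v0, real_lit v1) of (Some a, Some b) \<Rightarrow> real_op2 opr a b
      | _ \<Rightarrow> (case (idx_lit v0, idx_lit v1) of (Some a, Some b) \<Rightarrow> idx_op2 opr a b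
      | _ \<Rightarrow> (case (bool_lit_of v0, bool_lit_of v1) of (Some a, Some b) \<Rightarrow> bool_op2 opr a b
      | _ \<Rightarrow> None)))"

inductive ectx :: "(trm \<Rightarrow> trm) \<Rightarrow> bool" where
  "ectx (\<lambda>h. TApp h es)"
| "is_val f \<Longrightarrow> \<forall>v\<in>set vs. is_val v \<Longrightarrow> ectx (\<lambda>h. TApp f (vs @ h # es))"
| "ectx (\<lambda>h. TOp1 opr h)"
| "ectx (\<lambda>h. TOp2 opr h e)"
| "is_val v \<Longrightarrow> ectx (\<lambda>h. TOp2 opr v h)"
| "ectx (\<lambda>h. TLet h e)"
| "ectx (\<lambda>h. TIf h e1 e2)"
| "\<forall>v\<in>set vs. is_val v \<Longrightarrow> ectx (\<lambda>h. TArr (vs @ h # es))"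

inductive step :: "trm \<Rightarrow> trm \<Rightarrow> bool" (infix "\<longmapsto>" 50) where
  S_Ctx: "ectx C \<Longrightarrow> e \<longmapsto> e' \<Longrightarrow> C e \<longmapsto> C e'"
| S_CtxBot: "ectx C \<Longrightarrow> e \<longmapsto> TBot \<Longrightarrow> C e \<longmapsto> TBot"
| S_BotArg: "ectx C \<Longrightarrow> C TBot \<longmapsto> TBot"
| S_Beta: "\<forall>v\<in>set vs. is_val v \<Longrightarrow> length vs = n \<Longrightarrow> TApp (TLam n e) vs \<longmapsto> subst e 0 vs"
| S_Let: "is_val v \<Longrightarrow> TLet v e \<longmapsto> subst e 0 [v]"
| S_Fst: "is_val v0 \<Longrightarrow> is_val v1 \<Longrightarrow>
            TApp (TConst CFst) [TApp (TConst CPair) [v0, v1]] \<longmapsto> v0"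
| S_Snd: "is_val v0 \<Longrightarrow> is_val v1 \<Longrightarrow>
            TApp (TConst CSnd) [TApp (TConst CPair) [v0, v1]] \<longmapsto> v1"
| S_IfT: "TIf TTrue e1 e2 \<longmapsto> e1"
| S_IfF: "TIf TFalse e1 e2 \<longmapsto> e2"
| S_Op1: "is_val v \<Longrightarrow> TOp1 opr v \<longmapsto> (case op1_sem opr v of Some w \<Rightarrow> w | None \<Rightarrow> TBot)"
| S_Op2: "is_val v0 \<Longrightarrow> is_val v1 \<Longrightarrow>
            TOp2 opr v0 v1 \<longmapsto> (case op2_sem opr v0 v1 of Some w \<Rightarrow> w | None \<Rightarrow> TBot)"
| S_Get: "\<forall>v\<in>set vs. is_val v \<Longrightarrow> 0 \<le> i \<Longrightarrow> i < int (length vs) \<Longrightarrow>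
            TApp (TConst CGet) [TArr vs, TIdx i] \<longmapsto> vs ! nat i"
| S_Length: "\<forall>v\<in>set vs. is_val v \<Longrightarrow>
            TApp (TConst CLength) [TArr vs] \<longmapsto> TIdx (int (length vs))"
| S_Build: "TApp (TConst CBuild) [TIdx n, TLam 1 e] \<longmapsto>
            TArr (map (\<lambda>j. subst e 0 [TIdx (int j)]) [0..<nat n])"
| S_Ifold0: "is_val f \<Longrightarrow> is_val v0 \<Longrightarrow> TApp (TConst CIfold) [f, v0, TIdx 0] \<longmapsto> v0"
| S_IfoldS: "is_val f \<Longrightarrow> is_val v0 \<Longrightarrow> 0 \<le> i \<Longrightarrow>
            TApp (TConst CIfold) [f, v0, TIdx (i + 1)] \<longmapsto>
            TApp f [TApp (TConst CIfold) [f, v0, TIdx i], TIdx i]"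

end

theory Submission
  imports Defs
begin

text \<open>A congruence step is a replacement
  inside a one-frame evaluation context, which preserves the type of the hole. The
  \<open>\<beta>\<close>- and let-rules need the substitution lemma, which in de Bruijn form rests on
  weakening under \<open>lift\<close>. A primitive operator applied to values of its argument types
  meets literals by canonical forms, and its result (or \<open>\<bottom>\<close> outside the domain, which
  has every type) has the result type. The remaining rules of the constants follow by
  inverting their type schemes.\<close>

inductive_cases typing_AppE: "\<Gamma> \<turnstile> TApp f es : A"
inductive_cases typing_LamE: "\<Gamma> \<turnstile> TLam n e : A"
inductive_cases typing_LetE: "\<Gamma> \<turnstile> TLet e1 e2 : A"
inductive_cases typing_IfE: "\<Gamma> \<turnstile> TIf e1 e2 e3 : A"
inductive_cases typing_ArrE: "\<Gamma> \<turnstile> TArr es : A"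
inductive_cases typing_Op1E: "\<Gamma> \<turnstile> TOp1 opr e : A"
inductive_cases typing_Op2E: "\<Gamma> \<turnstile> TOp2 opr e1 e2 : A"
inductive_cases typing_ConstE: "\<Gamma> \<turnstile> TConst c : A"
inductive_cases typing_RealE: "\<Gamma> \<turnstile> TReal r : A"
inductive_cases typing_IdxE: "\<Gamma> \<turnstile> TIdx i : A"
inductive_cases typing_TrueE: "\<Gamma> \<turnstile> TTrue : A"
inductive_cases typing_FalseE: "\<Gamma> \<turnstile> TFalse : A"

lemma typing_VarI: "k < length \<Gamma> \<Longrightarrow> \<Gamma> ! k = A \<Longrightarrow> \<Gamma> \<turnstile> TVar k : A"
  using typing.T_Var by blast

lemma typing_lift:
  assumes "\<Delta> @ \<Gamma> \<turnstile> e : A"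
  shows "\<Delta> @ \<Theta> @ \<Gamma> \<turnstile> lift (length \<Delta>) (length \<Theta>) e : A"
  using assms
proof (induction "\<Delta> @ \<Gamma>" e A arbitrary: \<Delta> rule: typing.induct)
  case (T_Var k)
  then show ?case
    by (auto simp: nth_append intro!: typing_VarI)
next
  case (T_App e0 T Ts M es)
  then show ?case
    by (auto intro!: typing.T_App simp: list_all2_map1 elim!: list_all2_mono)
next
  case (T_Abs T Ts e M n)
  then show ?case
    using T_Abs.hyps(2)[of "(T # Ts) @ \<Delta>"] by (auto intro!: typing.T_Abs simp: add.commute)
next
  case (T_Let e1 T1 e2 T2)
  then show ?case
    using T_Let.hyps(4)[of "T1 # \<Delta>"] by (auto intro!: typing.T_Let)
next
  case (T_Arr es M)
  then show ?case by (auto intro!: typing.T_Arr)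
qed (auto intro: typing.intros)

corollary typing_lift0: "\<Gamma> \<turnstile> e : A \<Longrightarrow> \<Theta> @ \<Gamma> \<turnstile> lift 0 (length \<Theta>) e : A"
  using typing_lift[of "[]"] by simp

lemma typing_subst_Var:
  assumes "k < length (\<Delta> @ Us @ \<Gamma>)" and vs: "list_all2 (typing \<Gamma>) vs Us"
  shows "\<Delta> @ \<Gamma> \<turnstile> subst (TVar k) (length \<Delta>) vs : (\<Delta> @ Us @ \<Gamma>) ! k"
proof -
  have len: "length vs = length Us"
    using vs by (rule list_all2_lengthD)
  consider "k < length \<Delta>" | "length \<Delta> \<le> k" "k < length \<Delta> + length Us"
    | "length \<Delta> + length Us \<le> k"
    by linarith
  then show ?thesis
  proof cases
    case 1
    then show ?thesis by (auto simp: nth_append intro!: typing_VarI)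
  next
    case 2
    then have "\<Gamma> \<turnstile> vs ! (k - length \<Delta>) : Us ! (k - length \<Delta>)"
      using vs by (auto simp: list_all2_conv_all_nth)
    from typing_lift0[OF this, of \<Delta>] show ?thesis
      using 2 len by (auto simp: nth_append)
  next
    case 3
    then show ?thesis
      using assms len by (auto simp: nth_append add.commute intro!: typing_VarI)
  qed
qed

lemma typing_subst:
  assumes "\<Delta> @ Us @ \<Gamma> \<turnstile> e : A" and "list_all2 (typing \<Gamma>) vs Us"
  shows "\<Delta> @ \<Gamma> \<turnstile> subst e (length \<Delta>) vs : A"
  using assms
proof (induction "\<Delta> @ Us @ \<Gamma>" e A arbitrary: \<Delta> rule: typing.induct)
  case (T_Var k)
  then show ?case by (simp only: typing_subst_Var)
next
  case (T_App e0 T Ts M es)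
  then show ?case
    by (auto intro!: typing.T_App simp: list_all2_map1 elim!: list_all2_mono)
next
  case (T_Abs T Ts e M n)
  then show ?case
    using T_Abs.hyps(2)[of "(T # Ts) @ \<Delta>"] by (auto intro!: typing.T_Abs simp: add.commute)
next
  case (T_Let e1 T1 e2 T2)
  then show ?case
    using T_Let.hyps(4)[of "T1 # \<Delta>"] by (auto intro!: typing.T_Let)
next
  case (T_Arr es M)
  then show ?case by (auto intro!: typing.T_Arr)
qed (auto intro: typing.intros)

corollary typing_subst0:
  "Us @ \<Gamma> \<turnstile> e : A \<Longrightarrow> list_all2 (typing \<Gamma>) vs Us \<Longrightarrow> \<Gamma> \<turnstile> subst e 0 vs : A"
  using typing_subst[of "[]"] by simp

lemma list_all2_append_Cons_replace:
  assumes "list_all2 P (xs @ x # zs) ys" and "\<And>y. P x y \<Longrightarrow> P x' y"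
  shows "list_all2 P (xs @ x' # zs) ys"
proof -
  obtain us y vs where "ys = us @ y # vs" "list_all2 P xs us" "P x y" "list_all2 P zs vs"
    using assms(1) by (auto simp: list_all2_append1 list_all2_Cons1)
  then show ?thesis
    using assms(2) by (auto intro!: list_all2_appendI)
qed

lemma typing_ectx_replace:
  assumes "ectx C" and "\<Gamma> \<turnstile> C e : A" and "\<And>T. \<Gamma> \<turnstile> e : T \<Longrightarrow> \<Gamma> \<turnstile> e' : T"
  shows "\<Gamma> \<turnstile> C e' : A"
  using assms
proof (induction rule: ectx.induct)
  case (1 es)
  from 1(1) show ?case
    by (rule typing_AppE) (auto intro!: typing.T_App 1(2))
next
  case (2 f vs es)
  from 2(3) obtain T Ts M where "A = Ground M" and "\<Gamma> \<turnstile> f : Arrow T Ts M"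
    and "list_all2 (typing \<Gamma>) (vs @ e # es) (T # Ts)"
    by (rule typing_AppE) blast
  moreover from this(3) 2(4) have "list_all2 (typing \<Gamma>) (vs @ e' # es) (T # Ts)"
    by (rule list_all2_append_Cons_replace)
  ultimately show ?case
    by (simp add: typing.T_App)
next
  case (3 opr)
  from 3(1) show ?case
    by (rule typing_Op1E) (auto intro!: typing.T_Op1 3(2))
next
  case (4 opr e2)
  from 4(1) show ?case
    by (rule typing_Op2E) (auto intro!: typing.T_Op2 4(2))
next
  case (5 v opr)
  from 5(2) show ?case
    by (rule typing_Op2E) (auto intro!: typing.T_Op2 5(3))
next
  case (6 e2)
  from 6(1) show ?case
    by (rule typing_LetE) (auto intro!: typing.T_Let 6(2))
next
  case (7 e1 e2)
  from 7(1) show ?case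
    by (rule typing_IfE) (auto intro!: typing.T_If 7(2))
next
  case (8 vs es)
  from 8(2) show ?case
    by (rule typing_ArrE) (auto intro!: typing.T_Arr 8(3))
qed

lemma canonical_form_Double:
  assumes "is_val v" and "\<Gamma> \<turnstile> v : Ground TDouble"
  obtains r where "v = TReal r"
  using assms
  by (cases rule: is_val.cases)
    (auto elim: typing_IdxE typing_TrueE typing_FalseE typing_ArrE typing_LamE
      elim!: typing_AppE typing_ConstE const_ty.cases)

lemma canonical_form_Index:
  assumes "is_val v" and "\<Gamma> \<turnstile> v : Ground TIndex"
  obtains i where "v = TIdx i"
  using assms
  by (cases rule: is_val.cases)
    (auto elim: typing_RealE typing_TrueE typing_FalseE typing_ArrE typing_LamE
      elim!: typing_AppE typing_ConstE const_ty.cases)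

lemma canonical_form_Bool:
  assumes "is_val v" and "\<Gamma> \<turnstile> v : Ground TBool"
  obtains "v = TTrue" | "v = TFalse"
  using assms
  by (cases rule: is_val.cases)
    (auto elim: typing_RealE typing_IdxE typing_ArrE typing_LamE
      elim!: typing_AppE typing_ConstE const_ty.cases)

lemma typing_bool_lit: "\<Gamma> \<turnstile> bool_lit b : Ground TBool"
  by (simp add: bool_lit_def typing.intros)

lemma typing_op1_result:
  assumes "is_val v" and "\<Gamma> \<turnstile> v : Ground A" and "op1_ty opr A B"
  shows "\<Gamma> \<turnstile> (case op1_sem opr v of Some w \<Rightarrow> w | None \<Rightarrow> TBot) : Ground B"
proof -
  consider "A = TDouble" | "A = TIndex" | "A = TBool"
    using assms(3) by (cases rule: op1_ty.cases) (auto simp: is_num_def)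
  then show ?thesis
  proof cases
    case 1
    with assms obtain r where "v = TReal r"
      by (blast elim: canonical_form_Double)
    with assms(3) 1 show ?thesis
      by (cases rule: op1_ty.cases) (auto simp: op1_sem_def typing.intros)
  next
    case 2
    with assms obtain i where "v = TIdx i"
      by (blast elim: canonical_form_Index)
    with assms(3) 2 show ?thesis
      by (cases rule: op1_ty.cases) (auto simp: op1_sem_def typing.intros)
  next
    case 3
    with assms have "v = TTrue \<or> v = TFalse"
      by (blast elim: canonical_form_Bool)
    with assms(3) 3 show ?thesis
      by (cases rule: op1_ty.cases) (auto simp: op1_sem_def is_num_def typing_bool_lit)
  qed
qed

lemma typing_op2_result:
  assumes "is_val v0" and "\<Gamma> \<turnstile> v0 : Ground A0" and "is_val v1" and "\<Gamma> \<turnstile> v1 : Ground A1"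
    and "op2_ty opr A0 A1 B"
  shows "\<Gamma> \<turnstile> (case op2_sem opr v0 v1 of Some w \<Rightarrow> w | None \<Rightarrow> TBot) : Ground B"
proof -
  consider "A0 = TDouble" "A1 = TDouble" | "A0 = TIndex" "A1 = TIndex" | "A0 = TBool" "A1 = TBool"
    using assms(5) by (cases rule: op2_ty.cases) (auto simp: is_num_def)
  then show ?thesis
  proof cases
    case 1
    with assms obtain a b where "v0 = TReal a" "v1 = TReal b"
      by (metis canonical_form_Double)
    with assms(5) 1 show ?thesis
      by (cases rule: op2_ty.cases) (auto simp: op2_sem_def typing_bool_lit typing.intros)
  next
    case 2
    with assms obtain a b where "v0 = TIdx a" "v1 = TIdx b"
      by (metis canonical_form_Index)
    with assms(5) 2 show ?thesis
      by (cases rule: op2_ty.cases) (auto simp: op2_sem_def typing_bool_lit typing.intros)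
  next
    case 3
    with assms have "v0 = TTrue \<or> v0 = TFalse" "v1 = TTrue \<or> v1 = TFalse"
      by (metis canonical_form_Bool)+
    with assms(5) 3 show ?thesis
      by (cases rule: op2_ty.cases) (auto simp: op2_sem_def is_num_def typing_bool_lit typing.T_Bot)
  qed
qed

theorem lemma1:
  assumes "\<Gamma> \<turnstile> e : A"
    and "e \<longmapsto> e'"
  shows "\<Gamma> \<turnstile> e' : A"
  using assms(2,1)
proof (induction arbitrary: \<Gamma> A rule: step.induct)
  case (S_Ctx C e e')
  then show ?case by (blast intro: typing_ectx_replace)
next
  case (S_Beta vs n e)
  then show ?case
    by (auto elim!: typing_AppE typing_LamE intro: typing_subst0[of "_ # _", simplified])
next
  case (S_Let v e)
  then show ?case
    by (auto elim!: typing_LetE intro: typing_subst0[of "[_]", simplified])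
next
  case (S_Op1 v opr)
  then show ?case by (auto elim!: typing_Op1E intro: typing_op1_result)
next
  case (S_Op2 v0 v1 opr)
  then show ?case by (auto elim!: typing_Op2E intro: typing_op2_result)
next
  case (S_Build n e)
  then show ?case
    by (auto elim!: typing_AppE typing_ConstE typing_LamE const_ty.cases
        intro!: typing.T_Arr typing.T_Idx typing_subst0[of "[_]", simplified])
qed (auto elim!: typing_AppE typing_ConstE typing_ArrE typing_IfE const_ty.cases
    intro: typing.intros const_ty.intros)

end
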